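(* Let $N\ge 3$ be odd, let $K=\tilde F(N)$, and let $\mathcal{A}$ be a $K\times N$ circular Florentine rectangle over $\mathbb{Z}_N$ with rows $\pi_0,\dots,\pi_{K-1}$. Let $L=N(N+1)$ and for $0\le m<K$ define the length-$L$ sequence $C^m=(c^m_0,\dots,c^m_{L-1})$ by $c^m_i=\omega_{N+1}^{\pi_m(\langle i\rangle_N)\cdot i}$, $0\le i<L$. Then: (1) $\theta_a=\theta_c=\theta_{\max}=N+1$, where $\theta_a=\max\{|\theta_{C^m}(\tau)|:0\le m<K,\ 0<\tau<L\}$, $\theta_c=\max\{|\theta_{C^m,C^{m'}}(\tau)|:0\le m\neq m'<K,\ 0\le\tau<L\}$ and $\theta_{\max}=\max\{\theta_a,\theta_c\}$; (2) with $\Omega=\{1+a(N+1):a\in\mathbb{Z}_N\}$, for every $m$ the frequency-domain dual $\widehat{C}^m=(\hat c^m_0,\dots,\hat c^m_{L-1})$ satisfies $\hat c^m_j=0$ for $j\in\Omega$ and $|\hat c^m_j|=\sqrt{(N+1)/N}$ for $j\notin\Omega$ (so each $C^m$ is a spectrally constrained sequence with forbidden carrier set $\Omega$).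
   Context: $\omega_n=e^{2\pi\sqrt{-1}/n}$; $\langle i\rangle_N$ is $i$ reduced mod $N$. An $M\times N$ circular Florentine rectangle (CFR) over $\mathbb{Z}_N$ is an $M\times N$ array whose rows $\pi_i:\mathbb{Z}_N\to\mathbb{Z}_N$ are permutations of $\mathbb{Z}_N$ such that for every $m\in\mathbb{Z}_N\setminus\{0\}$ and all $i,j$, $x,y\in\mathbb{Z}_N$: $(\pi_i(x),\pi_i(x+m))=(\pi_j(y),\pi_j(y+m))$ (indices mod $N$) iff $i=j$ and $x=y$. $\tilde F(N)$ denotes the largest $M$ for which an $M\times N$ CFR exists (for odd $N\ge3$, $\tilde F(N)\ge 2$). Frequency-domain dual: $\hat c_k=\frac{1}{\sqrt L}\sum_{t=0}^{L-1}c_t\omega_L^{-tk}$. Periodic correlation: $\theta_{C,D}(\tau)=\sum_{t=0}^{L-1}c_td^*_{\langle t+\tau\rangle_L}$, $\theta_C=\theta_{C,C}$. *)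

theory Defs
  imports "HOL-Analysis.Analysis"
begin

definition omega :: "nat \<Rightarrow> complex" where
  "omega n = exp (2 * of_real pi * \<i> / of_nat n)"

definition is_CFR :: "nat \<Rightarrow> nat \<Rightarrow> (nat \<Rightarrow> nat \<Rightarrow> nat) \<Rightarrow> bool" where
  "is_CFR N M \<pi> \<longleftrightarrow>
     (\<forall>i<M. bij_betw (\<pi> i) {..<N} {..<N}) \<and>
     (\<forall>m\<in>{1..<N}. \<forall>i<M. \<forall>j<M. \<forall>x<N. \<forall>y<N.
        ((\<pi> i x, \<pi> i ((x + m) mod N)) = (\<pi> j y, \<pi> j ((y + m) mod N)))
          \<longleftrightarrow> (i = j \<and> x = y))"

definition F_tilde :: "nat \<Rightarrow> nat" where
  "F_tilde N = (GREATEST M. \<exists>\<pi>. is_CFR N M \<pi>)"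

definition pcorr :: "nat \<Rightarrow> (nat \<Rightarrow> complex) \<Rightarrow> (nat \<Rightarrow> complex) \<Rightarrow> nat \<Rightarrow> complex" where
  "pcorr L c d \<tau> = (\<Sum>t<L. c t * cnj (d ((t + \<tau>) mod L)))"

definition dft :: "nat \<Rightarrow> (nat \<Rightarrow> complex) \<Rightarrow> nat \<Rightarrow> complex" where
  "dft L c k = (1 / of_real (sqrt (real L))) * (\<Sum>t<L. c t * inverse (omega L) ^ (t * k))"

definition cfr_seq :: "nat \<Rightarrow> (nat \<Rightarrow> nat \<Rightarrow> nat) \<Rightarrow> nat \<Rightarrow> nat \<Rightarrow> complex" where
  "cfr_seq N \<pi> m i = omega (N + 1) ^ (\<pi> m (i mod N) * i)"

end

theory Submission
  imports Defs
begin

(* Write t = a + N q with a < N and q \<le> N. Since N = -1 modulo N + 1, the entry c^m_t equals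
   \<omega>_(N+1)^(\<pi>_m(a) (a - q)), so in a correlation or in a DFT coefficient the sum over q is a full
   character sum modulo N + 1. It kills every a except those satisfying a congruence, and what
   remains is N + 1 times a sum of roots of unity over
     {a. \<pi>_m(a) = \<pi>_m'(a + \<tau>)}   (correlations),   {a. \<pi>_m(a) = -j mod N + 1}   (DFT).
   For an autocorrelation this set is empty or all of Z_N (when N divides \<tau>, and then the sum is a
   geometric sum of modulus 1); for two distinct rows the Florentine property leaves at most one a;
   for the DFT there is exactly one a unless j = 1 mod N + 1, when there is none. Both maxima are
   attained since a 2 x N CFR exists for odd N (rows x and 2x), so F_tilde N \<ge> 2. *)

definition unity_root :: "nat \<Rightarrow> int \<Rightarrow> complex" where
  "unity_root n x = exp (2 * of_real pi * \<i> * of_int x / of_nat n)"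

lemma unity_root_add: "unity_root n (x + y) = unity_root n x * unity_root n y"
  unfolding unity_root_def by (simp add: exp_add[symmetric] add_divide_distrib algebra_simps)

lemma unity_root_power: "unity_root n x ^ k = unity_root n (x * int k)"
  unfolding unity_root_def exp_of_nat_mult[symmetric] by (simp add: ac_simps)

lemma unity_root_eq_1_iff:
  assumes "n > 0"
  shows "unity_root n x = 1 \<longleftrightarrow> int n dvd x"
proof -
  have "unity_root n x = 1 \<longleftrightarrow> (\<exists>k::int. real_of_int x = real_of_int k * real n)"
    unfolding unity_root_def exp_eq_1 using assms pi_gt_zero by (simp add: field_simps)
  also have "\<dots> \<longleftrightarrow> (\<exists>k::int. x = k * int n)"
    by (metis of_int_eq_iff of_int_mult of_int_of_nat_eq)
  finally show ?thesis by (auto simp: dvd_def mult.commute)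
qed

lemma unity_root_cong:
  assumes "n > 0" "int n dvd x - y"
  shows "unity_root n x = unity_root n y"
proof -
  have "unity_root n x = unity_root n (x - y) * unity_root n y"
    by (simp flip: unity_root_add)
  then show ?thesis using assms by (simp add: unity_root_eq_1_iff)
qed

lemma unity_root_of_nat_mod:
  assumes "n > 0"
  shows "unity_root n (int (a mod n)) = unity_root n (int a)"
  using assms mod_eq_dvd_iff[of "int (a mod n)" "int n" "int a"]
  by (intro unity_root_cong) (simp_all add: zmod_int)

lemma unity_root_mult_cancel:
  assumes "c > 0"
  shows "unity_root (c * n) (int c * x) = unity_root n x"
  using assms unfolding unity_root_def by (cases "n = 0") (simp_all add: field_simps)

lemma cnj_unity_root: "cnj (unity_root n x) = unity_root n (- x)"
  unfolding unity_root_def exp_cnj by simp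

lemma norm_unity_root: "cmod (unity_root n x) = 1"
  unfolding unity_root_def norm_exp_eq_Re by simp

lemma omega_power: "omega n ^ k = unity_root n (int k)"
  using unity_root_power[of n 1 k] by (simp add: omega_def unity_root_def)

lemma inverse_omega_power: "inverse (omega n) ^ k = unity_root n (- int k)"
  using unity_root_power[of n "-1" k] by (simp add: omega_def unity_root_def exp_minus)

lemma sum_unity_root:
  assumes "n > 0"
  shows "(\<Sum>q<n. unity_root n (x * int q)) = (if int n dvd x then of_nat n else 0)"
proof (cases "int n dvd x")
  case False
  have "unity_root n x \<noteq> 1" "unity_root n x ^ n = 1"
    using False assms by (simp_all add: unity_root_eq_1_iff unity_root_power)
  then have "(\<Sum>q<n. unity_root n x ^ q) = 0" by (simp add: sum_gp_strict)
  then show ?thesis using False by (simp add: unity_root_power)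
next
  case True
  then have "unity_root n (x * int q) = 1" for q
    using assms by (simp add: unity_root_eq_1_iff)
  then show ?thesis using True by simp
qed

(* Grouping t = a + N q, the inner sum over q is a full character sum modulo n. *)
lemma sum_mod_div_unity_root:
  assumes "n > 0"
  shows "(\<Sum>t<N * n. g (t mod N) * unity_root n (h (t mod N) * int (t div N)))
       = of_nat n * (\<Sum>a | a < N \<and> int n dvd h a. g a)"
proof -
  have "(\<Sum>t<N * n. g (t mod N) * unity_root n (h (t mod N) * int (t div N)))
      = (\<Sum>q<n. \<Sum>a<N. g a * unity_root n (h a * int q))"
    unfolding mult.commute[of N n] sum_mult_product by (intro sum.cong) auto
  also have "\<dots> = (\<Sum>a<N. g a * (\<Sum>q<n. unity_root n (h a * int q)))"
    by (subst sum.swap) (simp add: sum_distrib_left)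
  also have "\<dots> = of_nat n * (\<Sum>a<N. if int n dvd h a then g a else 0)"
    using assms by (auto simp: sum_unity_root sum_distrib_left intro!: sum.cong)
  also have "\<dots> = of_nat n * (\<Sum>a | a < N \<and> int n dvd h a. g a)"
    by (simp add: sum.inter_filter[symmetric] lessThan_def conj_commute)
  finally show ?thesis .
qed

lemma mod_eq_iff_int_dvd_diff: "x mod n = y mod n \<longleftrightarrow> int n dvd int x - int y"
  by (metis mod_eq_dvd_iff of_nat_eq_iff zmod_int)

lemma int_dvd_diff_iff_eq:
  assumes "x < n" "y < n"
  shows "int n dvd int x - int y \<longleftrightarrow> x = y"
  using assms by (simp flip: mod_eq_iff_int_dvd_diff)

lemma mod_add_eq_self_iff:
  fixes a N :: nat
  assumes "a < N"
  shows "(a + \<tau>) mod N = a \<longleftrightarrow> N dvd \<tau>"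
proof -
  have "(a + \<tau>) mod N = a mod N \<longleftrightarrow> N dvd (a + \<tau>) - a"
    by (rule mod_eq_dvd_iff_nat) simp
  then show ?thesis using assms by simp
qed

lemma mod_double_eq_iff:
  fixes x y N :: nat
  assumes "odd N"
  shows "2 * x mod N = 2 * y mod N \<longleftrightarrow> x mod N = y mod N"
proof -
  have "coprime (int N) 2" using assms by simp
  then have "int N dvd 2 * (int x - int y) \<longleftrightarrow> int N dvd int x - int y"
    by (rule coprime_dvd_mult_right_iff)
  moreover have "int (2 * x) - int (2 * y) = 2 * (int x - int y)" by simp
  ultimately show ?thesis
    unfolding mod_eq_iff_int_dvd_diff by simp
qed

lemma double_shift_mod_neq:
  fixes y m N :: nat
  assumes "m \<in> {1..<N}"
  shows "(2 * y mod N + m) mod N \<noteq> 2 * ((y + m) mod N) mod N"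
proof
  assume "(2 * y mod N + m) mod N = 2 * ((y + m) mod N) mod N"
  then have "(2 * y + m) mod N = 2 * (y + m) mod N"
    by (simp only: mod_add_left_eq mod_mult_right_eq)
  also have "2 * (y + m) = 2 * y + m + m" by simp
  finally have "(2 * y + m) mod N = (2 * y + m + m) mod N" .
  then have "int N dvd int m"
    unfolding mod_eq_iff_int_dvd_diff by simp
  then show False using assms by (auto dest: zdvd_imp_le)
qed

lemma cfr_seq_mod_period: "cfr_seq N \<pi> m (i mod (N * (N + 1))) = cfr_seq N \<pi> m i"
proof -
  let ?i = "i mod (N * (N + 1))"
  have "?i mod N = i mod N" "?i mod (N + 1) = i mod (N + 1)"
    by (simp_all only: mod_mod_cancel[OF dvd_triv_left] mod_mod_cancel[OF dvd_triv_right])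
  moreover have "omega (N + 1) ^ (k * ?i) = omega (N + 1) ^ (k * i)" for k
  proof -
    have "k * ?i mod (N + 1) = k * i mod (N + 1)"
      using \<open>?i mod (N + 1) = i mod (N + 1)\<close> by (metis mod_mult_right_eq)
    moreover have "N + 1 > 0" by simp
    ultimately show ?thesis
      unfolding omega_power by (metis unity_root_of_nat_mod)
  qed
  ultimately show ?thesis by (simp add: cfr_seq_def)
qed

lemma pcorr_cfr_seq:
  assumes "\<pi> m ` {..<N} \<subseteq> {..<N}" "\<pi> m' ` {..<N} \<subseteq> {..<N}"
  shows "pcorr (N * (N + 1)) (cfr_seq N \<pi> m) (cfr_seq N \<pi> m') \<tau>
       = of_nat (N + 1) * (\<Sum>a | a < N \<and> \<pi> m a = \<pi> m' ((a + \<tau>) mod N).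
                              unity_root (N + 1) (- int (\<pi> m a * \<tau>)))"
proof -
  define s where "s a = \<pi> m' ((a + \<tau>) mod N)" for a
  define g where
    "g a = unity_root (N + 1) ((int (\<pi> m a) - int (s a)) * int a - int (s a) * int \<tau>)" for a
  define h where "h a = int (s a) - int (\<pi> m a)" for a
  have summand: "cfr_seq N \<pi> m t * cnj (cfr_seq N \<pi> m' (t + \<tau>))
      = g (t mod N) * unity_root (N + 1) (h (t mod N) * int (t div N))" for t
  proof -
    define a q where "a = t mod N" and "q = t div N"
    have "t = a + N * q" by (simp add: a_def q_def)
    then have t: "int t = int a + int N * int q" by simp
    have "(t + \<tau>) mod N = (a + \<tau>) mod N" by (simp add: a_def mod_add_left_eq)
    then have "cnj (cfr_seq N \<pi> m' (t + \<tau>))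
        = unity_root (N + 1) (- (int (s a) * (int t + int \<tau>)))"
      by (simp add: cfr_seq_def omega_power cnj_unity_root s_def)
    moreover have "cfr_seq N \<pi> m t = unity_root (N + 1) (int (\<pi> m a) * int t)"
      by (simp add: cfr_seq_def omega_power a_def)
    ultimately have "cfr_seq N \<pi> m t * cnj (cfr_seq N \<pi> m' (t + \<tau>))
        = unity_root (N + 1) (int (\<pi> m a) * int t - int (s a) * (int t + int \<tau>))"
      by (simp flip: unity_root_add)
    also have "\<dots> = unity_root (N + 1)
        ((int (\<pi> m a) - int (s a)) * int a - int (s a) * int \<tau> + h a * int q)"
      \<comment> \<open>as N = -1 modulo N + 1\<close>
    proof (rule unity_root_cong)
      show "int (N + 1) dvd int (\<pi> m a) * int t - int (s a) * (int t + int \<tau>)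
          - ((int (\<pi> m a) - int (s a)) * int a - int (s a) * int \<tau> + h a * int q)"
        by (rule dvdI[of _ _ "(int (\<pi> m a) - int (s a)) * int q"])
          (simp add: t h_def algebra_simps)
    qed simp
    finally show ?thesis
      using a_def q_def by (simp add: g_def unity_root_add)
  qed
  have match: "int (N + 1) dvd h a \<longleftrightarrow> \<pi> m a = s a" if "a < N" for a
  proof -
    have "(a + \<tau>) mod N < N" using that by simp
    then have "\<pi> m a < N" "s a < N"
      using assms that unfolding s_def by blast+
    then show ?thesis
      using int_dvd_diff_iff_eq[of "s a" "N + 1" "\<pi> m a"] by (auto simp: h_def)
  qed
  have "pcorr (N * (N + 1)) (cfr_seq N \<pi> m) (cfr_seq N \<pi> m') \<tau>
      = (\<Sum>t<N * (N + 1). cfr_seq N \<pi> m t * cnj (cfr_seq N \<pi> m' (t + \<tau>)))"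
    unfolding pcorr_def cfr_seq_mod_period ..
  also have "\<dots> = of_nat (N + 1) * (\<Sum>a | a < N \<and> int (N + 1) dvd h a. g a)"
    unfolding summand by (rule sum_mod_div_unity_root) simp
  also have "{a. a < N \<and> int (N + 1) dvd h a} = {a. a < N \<and> \<pi> m a = s a}"
    using match by blast
  also have "(\<Sum>a | a < N \<and> \<pi> m a = s a. g a)
           = (\<Sum>a | a < N \<and> \<pi> m a = s a. unity_root (N + 1) (- int (\<pi> m a * \<tau>)))"
    by (rule sum.cong) (simp_all add: g_def)
  finally show ?thesis unfolding s_def .
qed

lemma norm_pcorr_cfr_seq_self:
  assumes bij: "bij_betw (\<pi> m) {..<N} {..<N}" and \<tau>: "0 < \<tau>" "\<tau> < N * (N + 1)"
  shows "cmod (pcorr (N * (N + 1)) (cfr_seq N \<pi> m) (cfr_seq N \<pi> m) \<tau>)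
       = (if N dvd \<tau> then real (N + 1) else 0)"
proof -
  have range: "\<pi> m ` {..<N} \<subseteq> {..<N}"
    using bij_betw_imp_surj_on[OF bij] by simp
  have "\<pi> m a = \<pi> m ((a + \<tau>) mod N) \<longleftrightarrow> N dvd \<tau>" if "a < N" for a
  proof -
    have "(a + \<tau>) mod N < N" using that by simp
    then have "\<pi> m a = \<pi> m ((a + \<tau>) mod N) \<longleftrightarrow> (a + \<tau>) mod N = a"
      using that inj_on_eq_iff[OF bij_betw_imp_inj_on[OF bij]] by (simp add: eq_commute)
    then show ?thesis unfolding mod_add_eq_self_iff[OF that] .
  qed
  then have matches: "{a. a < N \<and> \<pi> m a = \<pi> m ((a + \<tau>) mod N)}
                    = (if N dvd \<tau> then {..<N} else {})"
    by auto
  have pcorr_eq: "pcorr (N * (N + 1)) (cfr_seq N \<pi> m) (cfr_seq N \<pi> m) \<tau>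
      = of_nat (N + 1) * (\<Sum>a \<in> (if N dvd \<tau> then {..<N} else {}).
                              unity_root (N + 1) (- int (\<pi> m a * \<tau>)))"
    using pcorr_cfr_seq[of \<pi> m N m \<tau>, OF range range] unfolding matches .
  show ?thesis
  proof (cases "N dvd \<tau>")
    case True
    have "\<not> (N + 1) dvd \<tau>"
    proof
      assume "(N + 1) dvd \<tau>"
      then have "N * (N + 1) dvd \<tau>"
        by (rule divides_mult[OF True]) simp
      then show False
        using \<tau> by (auto dest: dvd_imp_le)
    qed
    then have "\<not> int (N + 1) dvd - int \<tau>"
      by (simp only: dvd_minus_iff int_dvd_int_iff not_False_eq_True)
    moreover have "0 < N + 1" by simp
    ultimately have "(\<Sum>v<N + 1. unity_root (N + 1) (- int \<tau> * int v)) = 0"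
      by (simp only: sum_unity_root if_False)
    moreover have "(\<Sum>a<N. unity_root (N + 1) (- int (\<pi> m a * \<tau>)))
                 = (\<Sum>v<N. unity_root (N + 1) (- int \<tau> * int v))"
      using sum.reindex_bij_betw[OF bij, of "\<lambda>v. unity_root (N + 1) (- int \<tau> * int v)"]
      by (simp add: mult.commute)
    ultimately have "(\<Sum>a<N. unity_root (N + 1) (- int (\<pi> m a * \<tau>)))
                   = - unity_root (N + 1) (- int \<tau> * int N)"
      by (simp add: eq_neg_iff_add_eq_0 add.commute)
    then show ?thesis
      using True unfolding pcorr_eq norm_mult norm_of_nat by (simp add: norm_unity_root)
  qed (use pcorr_eq in simp)
qed

lemma is_CFR_row_bij: "is_CFR N K \<pi> \<Longrightarrow> i < K \<Longrightarrow> bij_betw (\<pi> i) {..<N} {..<N}"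
  unfolding is_CFR_def by blast

lemma is_CFR_row_range: "is_CFR N K \<pi> \<Longrightarrow> i < K \<Longrightarrow> \<pi> i ` {..<N} \<subseteq> {..<N}"
  using bij_betw_imp_surj_on[OF is_CFR_row_bij] by blast

lemma is_CFR_pair_eq_iff:
  assumes "is_CFR N K \<pi>" "d \<in> {1..<N}" "i < K" "j < K" "x < N" "y < N"
  shows "(\<pi> i x, \<pi> i ((x + d) mod N)) = (\<pi> j y, \<pi> j ((y + d) mod N)) \<longleftrightarrow> i = j \<and> x = y"
  using assms unfolding is_CFR_def by blast

lemma is_CFR_shift_match_unique:
  assumes cfr: "is_CFR N K \<pi>" and rows: "m < K" "m' < K" "m \<noteq> m'"
    and "a < N" "b < N"
    and "\<pi> m a = \<pi> m' ((a + \<tau>) mod N)" "\<pi> m b = \<pi> m' ((b + \<tau>) mod N)"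
  shows "a = b"
proof -
  have False if ab: "a < b" "b < N"
    and match: "\<pi> m a = \<pi> m' ((a + \<tau>) mod N)" "\<pi> m b = \<pi> m' ((b + \<tau>) mod N)" for a b
  proof -
    define d where "d = b - a"
    have d: "d \<in> {1..<N}" using ab by (auto simp: d_def)
    have "(a + d) mod N = b" using ab by (simp add: d_def)
    moreover have "((a + \<tau>) mod N + d) mod N = (a + \<tau> + d) mod N"
      by (simp add: mod_add_left_eq)
    moreover have "a + \<tau> + d = b + \<tau>" using ab by (simp add: d_def)
    ultimately have "(\<pi> m a, \<pi> m ((a + d) mod N))
        = (\<pi> m' ((a + \<tau>) mod N), \<pi> m' (((a + \<tau>) mod N + d) mod N))"
      using match by simp
    moreover have "(a + \<tau>) mod N < N" using ab by simp
    ultimately have "m = m'"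
      using is_CFR_pair_eq_iff[OF cfr d rows(1,2)] ab by simp
    then show False using rows by simp
  qed
  then show ?thesis using assms(5-8) by (metis linorder_neqE_nat)
qed

lemma norm_pcorr_cfr_seq_cross:
  assumes cfr: "is_CFR N K \<pi>" and rows: "m < K" "m' < K" "m \<noteq> m'"
  shows "cmod (pcorr (N * (N + 1)) (cfr_seq N \<pi> m) (cfr_seq N \<pi> m') \<tau>)
       = (if \<exists>a<N. \<pi> m a = \<pi> m' ((a + \<tau>) mod N) then real (N + 1) else 0)"
proof -
  let ?A = "{a. a < N \<and> \<pi> m a = \<pi> m' ((a + \<tau>) mod N)}"
  have pcorr_eq: "pcorr (N * (N + 1)) (cfr_seq N \<pi> m) (cfr_seq N \<pi> m') \<tau>
      = of_nat (N + 1) * (\<Sum>a\<in>?A. unity_root (N + 1) (- int (\<pi> m a * \<tau>)))"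
    using pcorr_cfr_seq[of \<pi> m N m' \<tau>] is_CFR_row_range[OF cfr] rows by blast
  show ?thesis
  proof (cases "\<exists>a<N. \<pi> m a = \<pi> m' ((a + \<tau>) mod N)")
    case True
    then obtain a0 where "a0 \<in> ?A" by blast
    then have A: "?A = {a0}"
      using is_CFR_shift_match_unique[OF cfr rows] by blast
    show ?thesis
      using True unfolding pcorr_eq A norm_mult norm_of_nat by (simp add: norm_unity_root)
  next
    case False
    then have A: "?A = {}" by blast
    show ?thesis using False unfolding pcorr_eq A by simp
  qed
qed

lemma Max_autocorr_cfr_seq:
  assumes cfr: "is_CFR N K \<pi>" and "0 < K" "0 < N"
  shows "Max {cmod (pcorr (N * (N + 1)) (cfr_seq N \<pi> m) (cfr_seq N \<pi> m) \<tau>) | m \<tau>.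
                m < K \<and> 0 < \<tau> \<and> \<tau> < N * (N + 1)} = real (N + 1)"
    (is "Max ?S = _")
proof (rule Max_eqI)
  show "finite ?S" by (intro finite_image_set2) auto
next
  fix y assume "y \<in> ?S"
  then show "y \<le> real (N + 1)"
    using norm_pcorr_cfr_seq_self is_CFR_row_bij[OF cfr] by fastforce
next
  have "cmod (pcorr (N * (N + 1)) (cfr_seq N \<pi> 0) (cfr_seq N \<pi> 0) N) = real (N + 1)"
    using norm_pcorr_cfr_seq_self[of \<pi> 0 N N] is_CFR_row_bij[OF cfr \<open>0 < K\<close>] \<open>0 < N\<close>
    by simp
  then show "real (N + 1) \<in> ?S" using assms by force
qed

lemma Max_crosscorr_cfr_seq:
  assumes cfr: "is_CFR N K \<pi>" and "1 < K" "0 < N"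
  shows "Max {cmod (pcorr (N * (N + 1)) (cfr_seq N \<pi> m) (cfr_seq N \<pi> m') \<tau>) | m m' \<tau>.
                m < K \<and> m' < K \<and> m \<noteq> m' \<and> \<tau> < N * (N + 1)} = real (N + 1)"
    (is "Max ?S = _")
proof (rule Max_eqI)
  have "?S \<subseteq> (\<Union>m<K. \<Union>m'<K. (\<lambda>\<tau>. cmod (pcorr (N * (N + 1))
          (cfr_seq N \<pi> m) (cfr_seq N \<pi> m') \<tau>)) ` {..<N * (N + 1)})"
    by blast
  then show "finite ?S" by (rule finite_subset) simp
next
  fix y assume "y \<in> ?S"
  then show "y \<le> real (N + 1)"
    using norm_pcorr_cfr_seq_cross[OF cfr] by auto
next
  have "\<pi> 0 0 \<in> \<pi> 1 ` {..<N}"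
    using is_CFR_row_range[OF cfr] bij_betw_imp_surj_on[OF is_CFR_row_bij[OF cfr \<open>1 < K\<close>]]
      assms by auto
  then obtain y where y: "y < N" "\<pi> 1 y = \<pi> 0 0" by auto
  then have "\<exists>a<N. \<pi> 0 a = \<pi> 1 ((a + y) mod N)"
    using \<open>0 < N\<close> by (intro exI[of _ 0]) simp
  then have corr: "cmod (pcorr (N * (N + 1)) (cfr_seq N \<pi> 0) (cfr_seq N \<pi> 1) y) = real (N + 1)"
    using norm_pcorr_cfr_seq_cross[OF cfr _ \<open>1 < K\<close>, of 0 y] assms by auto
  have "y < N * (N + 1)" using y by (simp add: trans_less_add1)
  then show "real (N + 1) \<in> ?S"
    unfolding mem_Collect_eq
    by (intro exI[of _ 0] exI[of _ 1] exI[of _ y]) (use corr assms in simp)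
qed

lemma dft_cfr_seq:
  assumes "0 < N"
  shows "dft (N * (N + 1)) (cfr_seq N \<pi> m) j
       = of_nat (N + 1) / of_real (sqrt (real (N * (N + 1))))
         * (\<Sum>a | a < N \<and> (N + 1) dvd \<pi> m a + j.
              unity_root (N * (N + 1)) (int a * (int N * int (\<pi> m a) - int j)))"
proof -
  define g where "g a = unity_root (N * (N + 1)) (int a * (int N * int (\<pi> m a) - int j))" for a
  define h where "h a = int N * int (\<pi> m a) - int j" for a
  have summand: "cfr_seq N \<pi> m t * inverse (omega (N * (N + 1))) ^ (t * j)
      = g (t mod N) * unity_root (N + 1) (h (t mod N) * int (t div N))" for t
  proof -
    define a q where "a = t mod N" and "q = t div N"
    have "t = a + N * q" by (simp add: a_def q_def)
    then have t: "int t = int a + int N * int q" by simp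
    have "cfr_seq N \<pi> m t = unity_root (N * (N + 1)) (int N * (int (\<pi> m a) * int t))"
      using unity_root_mult_cancel[OF assms, of "N + 1" "int (\<pi> m a) * int t"]
      by (simp add: cfr_seq_def omega_power a_def)
    moreover have "inverse (omega (N * (N + 1))) ^ (t * j) = unity_root (N * (N + 1)) (- (int t * int j))"
      by (simp add: inverse_omega_power)
    ultimately have "cfr_seq N \<pi> m t * inverse (omega (N * (N + 1))) ^ (t * j)
        = unity_root (N * (N + 1)) (int a * h a + int N * (h a * int q))"
      by (simp add: t h_def algebra_simps flip: unity_root_add)
    also have "\<dots> = g a * unity_root (N + 1) (h a * int q)"
      using unity_root_mult_cancel[OF assms, of "N + 1" "h a * int q"]
      by (simp add: g_def h_def unity_root_add)
    finally show ?thesis by (simp add: a_def q_def)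
  qed
  have match: "int (N + 1) dvd h a \<longleftrightarrow> (N + 1) dvd \<pi> m a + j" for a
  proof -
    have "h a = - int (\<pi> m a + j) + int (N + 1) * int (\<pi> m a)" by (simp add: h_def algebra_simps)
    then show ?thesis by (simp only: zdvd_reduce dvd_minus_iff int_dvd_int_iff)
  qed
  have "dft (N * (N + 1)) (cfr_seq N \<pi> m) j
      = 1 / of_real (sqrt (real (N * (N + 1))))
        * (of_nat (N + 1) * (\<Sum>a | a < N \<and> (N + 1) dvd \<pi> m a + j. g a))"
    unfolding dft_def summand match[symmetric] by (subst sum_mod_div_unity_root) simp_all
  then show ?thesis by (simp add: g_def)
qed

lemma divide_sqrt_mult_eq_sqrt_divide:
  fixes a b :: real
  assumes "0 \<le> a"
  shows "a / sqrt (b * a) = sqrt (a / b)"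
proof (cases "a = 0")
  case False
  have "a / sqrt (b * a) = (sqrt a * sqrt a) / (sqrt b * sqrt a)"
    using assms by (simp add: real_sqrt_mult)
  also have "\<dots> = sqrt a / sqrt b"
    by (rule mult_divide_mult_cancel_right) (use False assms in simp)
  finally show ?thesis by (simp add: real_sqrt_divide)
qed simp

lemma dft_cfr_seq_eq_0:
  assumes range: "\<pi> m ` {..<N} \<subseteq> {..<N}" and "j mod (N + 1) = 1"
  shows "dft (N * (N + 1)) (cfr_seq N \<pi> m) j = 0"
proof (cases "N = 0")
  case False
  have "\<not> (N + 1) dvd \<pi> m a + j" if "a < N" for a
  proof -
    have "(\<pi> m a + j) mod (N + 1) = (\<pi> m a + 1) mod (N + 1)"
      using assms(2) by (metis mod_add_right_eq)
    also have "\<dots> = \<pi> m a + 1" using range that by auto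
    finally show ?thesis by (simp add: dvd_eq_mod_eq_0)
  qed
  then have none: "{a. a < N \<and> (N + 1) dvd \<pi> m a + j} = {}" by blast
  have "0 < N" using False by simp
  show ?thesis unfolding dft_cfr_seq[OF \<open>0 < N\<close>, of \<pi> m j] none by simp
qed (simp add: dft_def)

lemma norm_dft_cfr_seq:
  assumes bij: "bij_betw (\<pi> m) {..<N} {..<N}" and "0 < N" and "j mod (N + 1) \<noteq> 1"
  shows "cmod (dft (N * (N + 1)) (cfr_seq N \<pi> m) j) = sqrt (real (N + 1) / real N)"
proof -
  define r where "r = j mod (N + 1)"
  \<comment> \<open>the residue of -j modulo N + 1, which is below N exactly because r \<noteq> 1\<close>
  define v where "v = (if r = 0 then 0 else N + 1 - r)"
  have "r < N + 1" by (simp add: r_def)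
  then have "v < N" using assms(2,3) by (auto simp: v_def r_def)
  have v_dvd: "(N + 1) dvd v + j"
  proof -
    have "(v + j) mod (N + 1) = (v + r) mod (N + 1)" by (simp add: r_def mod_add_right_eq)
    also have "\<dots> = 0" using \<open>r < N + 1\<close> by (auto simp: v_def)
    finally show ?thesis by (simp add: dvd_eq_mod_eq_0)
  qed
  have match: "(N + 1) dvd x + j \<longleftrightarrow> x = v" if "x < N" for x
  proof
    assume "(N + 1) dvd x + j"
    then have "int (N + 1) dvd int (x + j) - int (v + j)"
      using v_dvd by (simp only: int_dvd_int_iff dvd_diff)
    then show "x = v"
      using int_dvd_diff_iff_eq[of x "N + 1" v] that \<open>v < N\<close> by simp
  qed (use v_dvd in simp)
  obtain a0 where a0: "a0 < N" "\<pi> m a0 = v"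
    using bij_betw_imp_surj_on[OF bij] \<open>v < N\<close> by (metis imageE lessThan_iff)
  have single: "{a. a < N \<and> (N + 1) dvd \<pi> m a + j} = {a0}"
  proof -
    have "(N + 1) dvd \<pi> m a + j \<longleftrightarrow> a = a0" if "a < N" for a
      using match[of "\<pi> m a"] bij_betwE[OF bij] a0 that
        inj_on_eq_iff[OF bij_betw_imp_inj_on[OF bij]] by auto
    then show ?thesis using a0 by blast
  qed
  have "cmod (dft (N * (N + 1)) (cfr_seq N \<pi> m) j)
      = real (N + 1) / sqrt (real (N * (N + 1)))"
    unfolding dft_cfr_seq[OF \<open>0 < N\<close>, of \<pi> m j] single norm_mult norm_divide norm_of_nat
    by (simp add: norm_unity_root)
  also have "\<dots> = sqrt (real (N + 1) / real N)"
    unfolding of_nat_mult by (rule divide_sqrt_mult_eq_sqrt_divide) simp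
  finally show ?thesis .
qed

lemma mem_one_plus_multiples_iff:
  fixes j n N :: nat
  assumes "1 < n" "j < N * n"
  shows "j \<in> {1 + a * n | a. a < N} \<longleftrightarrow> j mod n = 1"
proof
  assume "j \<in> {1 + a * n | a. a < N}"
  then obtain a where "j = 1 + a * n" by blast
  then show "j mod n = 1" using assms(1) by (simp only: mod_mult_self1 mod_less)
next
  assume "j mod n = 1"
  then have "j = 1 + j div n * n" by (metis mod_div_mult_eq add.commute)
  moreover have "j div n < N" using assms(2) by (simp add: less_mult_imp_div_less)
  ultimately show "j \<in> {1 + a * n | a. a < N}" by blast
qed

lemma is_CFR_rows_le:
  assumes "2 \<le> N" and cfr: "is_CFR N M \<pi>"
  shows "M \<le> N"
proof -
  define f where "f = (\<lambda>(i, x). (\<pi> i x, \<pi> i ((x + 1) mod N)))"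
  have "inj_on f ({..<M} \<times> {..<N})"
  proof (rule inj_onI)
    fix u v assume "u \<in> {..<M} \<times> {..<N}" "v \<in> {..<M} \<times> {..<N}" and fuv: "f u = f v"
    then obtain i x j y where u: "u = (i, x)" "i < M" "x < N" and v: "v = (j, y)" "j < M" "y < N"
      by blast
    have "(\<pi> i x, \<pi> i ((x + 1) mod N)) = (\<pi> j y, \<pi> j ((y + 1) mod N))"
      using fuv unfolding u v f_def by simp
    moreover have "1 \<in> {1..<N}" using assms(1) by simp
    ultimately show "u = v"
      using is_CFR_pair_eq_iff[OF cfr _ u(2) v(2) u(3) v(3)] u v by blast
  qed
  moreover have "f ` ({..<M} \<times> {..<N}) \<subseteq> {..<N} \<times> {..<N}"
    using is_CFR_row_range[OF cfr] assms(1) by (fastforce simp: f_def)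
  ultimately have "card ({..<M} \<times> {..<N}) \<le> card ({..<N} \<times> {..<N})"
    by (intro card_inj_on_le) auto
  then show ?thesis using assms(1) by (simp add: card_cartesian_product)
qed

lemma is_CFR_doubling:
  assumes "odd N"
  shows "is_CFR N 2 (\<lambda>i x. if i = 0 then x else 2 * x mod N)"
proof -
  have "N > 0" using assms by (rule odd_pos)
  have inj: "inj_on (\<lambda>x. 2 * x mod N) {..<N}"
    using mod_double_eq_iff[OF assms] by (auto simp: inj_on_def)
  moreover have "(\<lambda>x. 2 * x mod N) ` {..<N} \<subseteq> {..<N}" using \<open>N > 0\<close> by auto
  ultimately have double: "bij_betw (\<lambda>x. 2 * x mod N) {..<N} {..<N}"
    by (simp add: bij_betw_def endo_inj_surj)
  have rows: "bij_betw (\<lambda>x. if i = 0 then x else 2 * x mod N) {..<N} {..<N}" for i :: nat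
  proof (cases "i = 0")
    case True
    then show ?thesis by (simp add: bij_betw_def)
  qed (use double in simp)
  have pairs:
    "(if i = 0 then x else 2 * x mod N, if i = 0 then (x + m) mod N else 2 * ((x + m) mod N) mod N)
      = (if j = 0 then y else 2 * y mod N, if j = 0 then (y + m) mod N else 2 * ((y + m) mod N) mod N)
      \<longleftrightarrow> i = j \<and> x = y"
    if "m \<in> {1..<N}" "i < 2" "j < 2" "x < N" "y < N" for m i j x y :: nat
    using that inj_onD[OF inj, of x y]
      double_shift_mod_neq[OF that(1), of x] double_shift_mod_neq[OF that(1), of y]
    by (auto simp: less_2_cases_iff)
  show ?thesis
    unfolding is_CFR_def using rows pairs by blast
qed

lemma F_tilde_ge_2:
  assumes "odd N" "3 \<le> N"
  shows "2 \<le> F_tilde N"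
  unfolding F_tilde_def
  by (rule Greatest_le_nat[where b = N])
    (use is_CFR_doubling[OF assms(1)] is_CFR_rows_le assms in auto)

theorem theorem3:
  fixes N K :: nat and \<pi> :: "nat \<Rightarrow> nat \<Rightarrow> nat"
  assumes "odd N" and "N \<ge> 3" and "K = F_tilde N" and "is_CFR N K \<pi>"
  shows "(let L = N * (N + 1);
              C = cfr_seq N \<pi>;
              \<theta>a = Max {cmod (pcorr L (C m) (C m) \<tau>) | m \<tau>. m < K \<and> 0 < \<tau> \<and> \<tau> < L};
              \<theta>c = Max {cmod (pcorr L (C m) (C m') \<tau>) | m m' \<tau>. m < K \<and> m' < K \<and> m \<noteq> m' \<and> \<tau> < L};
              \<Omega> = {1 + a * (N + 1) | a. a < N}
          in \<theta>a = real (N + 1) \<and> \<theta>c = real (N + 1) \<and> max \<theta>a \<theta>c = real (N + 1) \<and>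
             (\<forall>m<K. \<forall>j<L.
                (j \<in> \<Omega> \<longrightarrow> dft L (C m) j = 0) \<and>
                (j \<notin> \<Omega> \<longrightarrow> cmod (dft L (C m) j) = sqrt (real (N + 1) / real N))))"
proof -
  note cfr = \<open>is_CFR N K \<pi>\<close>
  have "0 < N" "1 < N + 1" "0 < K" "1 < K"
    using \<open>N \<ge> 3\<close> F_tilde_ge_2[OF \<open>odd N\<close> \<open>N \<ge> 3\<close>] \<open>K = F_tilde N\<close> by simp_all
  have spectrum:
    "(j \<in> {1 + a * (N + 1) | a. a < N} \<longrightarrow> dft (N * (N + 1)) (cfr_seq N \<pi> m) j = 0) \<and>
     (j \<notin> {1 + a * (N + 1) | a. a < N} \<longrightarrow>
         cmod (dft (N * (N + 1)) (cfr_seq N \<pi> m) j) = sqrt (real (N + 1) / real N))"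
    if "m < K" "j < N * (N + 1)" for m j
    using mem_one_plus_multiples_iff[OF \<open>1 < N + 1\<close> that(2)]
      dft_cfr_seq_eq_0[of \<pi> m N j, OF is_CFR_row_range[OF cfr that(1)]]
      norm_dft_cfr_seq[of \<pi> m N j, OF is_CFR_row_bij[OF cfr that(1)] \<open>0 < N\<close>]
    by blast
  show ?thesis
    unfolding Let_def Max_autocorr_cfr_seq[OF cfr \<open>0 < K\<close> \<open>0 < N\<close>]
      Max_crosscorr_cfr_seq[OF cfr \<open>1 < K\<close> \<open>0 < N\<close>]
    using spectrum by simp
qed

end
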